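(* In the epoch setting described in the context, for each $i\in[\rho]$ and each $I\in\mathcal{I}$, there exists an agent in $A^{(i)}$ that visits every state of $I$ during the roundabout process of the $i$-th epoch (i.e., whose set of visited states after the $t$ steps of that process contains $I$).
   Context: Let $n\ge 2$ and $k\ge1$, $\Delta$ be natural numbers, $\mathcal{G}=\langle G_1,\dots,G_L\rangle$ a temporal graph (sequence of graphs on a common $n$-element vertex set $V$), and $T$ a spanning tree of its underlying graph (the union of the snapshots). A snapshot is $k$-edge-deficient w.r.t. $T$ if it contains all but at most $k$ edges of $T$. Let $N=2(n-1)$, fix a DFS tour of $T$ from a root $r$ traversing each edge twice, with cyclic vertex sequence $(v_1,\dots,v_{N+1})$, $v_{N+1}=v_1=r$, tour edges $e_q=\{v_q,v_{q+1}\}$. Circular intervals: $[\![i,j]\!]=\{i,\dots,j\}$ if $i\le j$, $\{i,\dots,N,1,\dots,j\}$ if $i>j$; $[\![i,j[\![=[\![i,j]\!]\setminus\{j\}$. Roundabout process on a sequence $H_1,\dots,H_t$ of graphs: agents $a_1,\dots,a_N$, $s_i(0)=i$; at step $\tau$, if $s_i(\tau-1)=q$ then $s_i(\tau)=(q\bmod N)+1$ if $e_q\in E(H_\tau)$, else $q$; visited states $D_i(\tau)=[\![i,s_i(\tau)]\!]$, $D_i(0)=\{i\}$; active sets $A(0)=$ all agents, and $A(\tau)$ is obtained from $A(\tau-1)$ by repeatedly removing an arbitrary agent $a_i$ with $D_i(\tau)\subseteq\bigcup D_j(\tau)$ over the other current agents, until none remains. Let $t=\lfloor N/(2k)\rfloor$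 and $\rho=\lceil 18k\ln(6k)\rceil$. Assume an initial part of $[L]$ is partitioned into $\rho$ consecutive intervals (epochs), each containing at least $\Delta+t$ snapshots that are $k$-edge-deficient w.r.t. $T$; each epoch's first $\Delta$ time steps form its repositioning part, and the rest (containing at least $t$ such snapshots) is its roundabout part. In epoch $i$, run the roundabout process for $t$ steps on the first $t$ $k$-edge-deficient snapshots of its roundabout part, let $A^{(i)}$ be the active agents after step $t$ and $S^{(i)}$ their initial states. Let $\bigcup_{i\in[\rho]}S^{(i)}=\{m_1<\dots<m_d\}$, $I_j=[\![m_j,m_{j+1}[\![$ for $j\in[d-1]$, $I_d=[\![m_d,m_1[\![$, and $\mathcal{I}=\{I_1,\dots,I_d\}$. *)

theory Defs
  imports Complex_Main
begin

definition edges_on :: "'v set \<Rightarrow> 'v set set" where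
  "edges_on V = {e. \<exists>u w. u \<in> V \<and> w \<in> V \<and> u \<noteq> w \<and> e = {u, w}}"

definition connected_on :: "'v set \<Rightarrow> 'v set set \<Rightarrow> bool" where
  "connected_on V T \<longleftrightarrow> (\<forall>u\<in>V. \<forall>w\<in>V. \<exists>p. p \<noteq> [] \<and> hd p = u \<and> last p = w \<and>
      (\<forall>j < length p - 1. {p ! j, p ! (j+1)} \<in> T))"

definition has_cycle :: "'v set set \<Rightarrow> bool" where
  "has_cycle T \<longleftrightarrow> (\<exists>c. length c \<ge> 3 \<and> distinct c \<and>
      (\<forall>j < length c - 1. {c ! j, c ! (j+1)} \<in> T) \<and> {last c, hd c} \<in> T)"

definition spanning_tree :: "'v set \<Rightarrow> 'v set set \<Rightarrow> 'v set set \<Rightarrow> bool" where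
  "spanning_tree V E T \<longleftrightarrow> T \<subseteq> E \<and> T \<subseteq> edges_on V \<and> connected_on V T \<and> \<not> has_cycle T"

definition k_edge_deficient :: "nat \<Rightarrow> 'v set set \<Rightarrow> 'v set set \<Rightarrow> bool" where
  "k_edge_deficient k T H \<longleftrightarrow> card (T - H) \<le> k"

text \<open>DFS tour of the tree T from root r: a closed walk v 1, ..., v (N+1) with v 1 = v (N+1) = r
  along edges of T traversing every edge of T exactly twice (in a tree these are exactly the DFS tours).\<close>
definition dfs_tour :: "'v set set \<Rightarrow> 'v \<Rightarrow> nat \<Rightarrow> (nat \<Rightarrow> 'v) \<Rightarrow> bool" where
  "dfs_tour T r N v \<longleftrightarrow> v 1 = r \<and> v (N+1) = r \<and>
     (\<forall>q\<in>{1..N}. {v q, v (Suc q)} \<in> T) \<and>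
     (\<forall>e\<in>T. card {q\<in>{1..N}. {v q, v (Suc q)} = e} = 2)"

definition cint :: "nat \<Rightarrow> nat \<Rightarrow> nat \<Rightarrow> nat set" where
  "cint N i j = (if i \<le> j then {i..j} else {i..N} \<union> {1..j})"

definition cinto :: "nat \<Rightarrow> nat \<Rightarrow> nat \<Rightarrow> nat set" where
  "cinto N i j = cint N i j - {j}"

text \<open>State of agent a_i after tau steps on graphs H 1, H 2, ...; e q is the q-th tour edge.\<close>
primrec rstate :: "nat \<Rightarrow> (nat \<Rightarrow> 'v set) \<Rightarrow> (nat \<Rightarrow> 'v set set) \<Rightarrow> nat \<Rightarrow> nat \<Rightarrow> nat" where
  "rstate N e H i 0 = i"
| "rstate N e H i (Suc \<tau>) =
     (if e (rstate N e H i \<tau>) \<in> H (Suc \<tau>) then rstate N e H i \<tau> mod N + 1 else rstate N e H i \<tau>)"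

definition visited :: "nat \<Rightarrow> (nat \<Rightarrow> 'v set) \<Rightarrow> (nat \<Rightarrow> 'v set set) \<Rightarrow> nat \<Rightarrow> nat \<Rightarrow> nat set" where
  "visited N e H i \<tau> = (if \<tau> = 0 then {i} else cint N i (rstate N e H i \<tau>))"

definition removable :: "(nat \<Rightarrow> nat set) \<Rightarrow> nat set \<Rightarrow> nat \<Rightarrow> bool" where
  "removable D A a \<longleftrightarrow> a \<in> A \<and> D a \<subseteq> \<Union> (D ` (A - {a}))"

definition remove_step :: "(nat \<Rightarrow> nat set) \<Rightarrow> nat set \<Rightarrow> nat set \<Rightarrow> bool" where
  "remove_step D A A' \<longleftrightarrow> (\<exists>a. removable D A a \<and> A' = A - {a})"

text \<open>Agent a_i is identified with i.\<close>
definition active_seq :: "nat \<Rightarrow> (nat \<Rightarrow> 'v set) \<Rightarrow> (nat \<Rightarrow> 'v set set) \<Rightarrow> nat \<Rightarrow> (nat \<Rightarrow> nat set) \<Rightarrow> bool" where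
  "active_seq N e H t Aseq \<longleftrightarrow> Aseq 0 = {1..N} \<and>
     (\<forall>\<tau> < t. (remove_step (\<lambda>a. visited N e H a (Suc \<tau>)))\<^sup>*\<^sup>* (Aseq \<tau>) (Aseq (Suc \<tau>)) \<and>
              (\<forall>a. \<not> removable (\<lambda>a. visited N e H a (Suc \<tau>)) (Aseq (Suc \<tau>)) a))"

end

theory Submission
  imports Defs
begin

text \<open>As long as fewer than \<open>N\<close> steps have been made, every visited set is an arc starting at
  the agent's initial state that only grows, and removing an agent never changes the union of
  the visited sets of the active agents; hence after \<open>t < N\<close> steps the active agents of each
  epoch still visit every state. Let \<open>I = [m, m')\<close> be a gap between cyclically consecutive
  initial states of surviving agents and let \<open>p\<close> be its last state. Some agent \<open>a\<close> active
  after epoch \<open>i\<close> visits \<open>p\<close>. Its initial state is one of the \<open>m\<^sub>j\<close>, so it does not lie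
  strictly inside \<open>I\<close>; the arc from \<open>a\<close> to \<open>p\<close> therefore enters \<open>I\<close> at \<open>m\<close> and covers
  all of it.\<close>

definition cycle_dist :: "nat \<Rightarrow> nat \<Rightarrow> nat \<Rightarrow> nat" where
  "cycle_dist N a x = (if a \<le> x then x - a else x + N - a)"

lemma mem_cint_iff_cycle_dist:
  assumes "a \<in> {1..N}" "s \<in> {1..N}"
  shows "x \<in> cint N a s \<longleftrightarrow> x \<in> {1..N} \<and> cycle_dist N a x \<le> cycle_dist N a s"
  using assms by (auto simp: cint_def cycle_dist_def)

lemma cycle_dist_succ:
  assumes "a \<in> {1..N}" "s \<in> {1..N}" "cycle_dist N a s + 1 < N"
  shows "cycle_dist N a (s mod N + 1) = cycle_dist N a s + 1"
  using assms by (cases "s = N") (auto simp: cycle_dist_def)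

lemma cint_subset_cint_right:
  assumes "s \<in> cint N a s'"
  shows "cint N a s \<subseteq> cint N a s'"
  using assms unfolding cint_def by (cases "a \<le> s"; cases "a \<le> s'") auto

lemma cint_subset_cint_left:
  assumes "a \<in> {1..N}" "m \<in> {1..N}" "p \<in> {1..N}" "a \<notin> cint N m p - {m}"
  shows "cint N m p \<subseteq> cint N a p"
  using assms unfolding cint_def by (cases "m \<le> p"; cases "a \<le> p") auto

lemma cinto_eq_cint_pred:
  assumes "m \<in> {1..N}" "m' \<in> {1..N}" "m \<noteq> m'"
  shows "cinto N m m' = cint N m (if m' = 1 then N else m' - 1)"
  using assms unfolding cinto_def cint_def by auto

text \<open>On the set of initial states of surviving agents this is the \<open>nxt\<close> of the statement, and
  \<open>cinto N m (cyclic_succ M m)\<close> is the interval \<open>I\<^sub>j\<close> with \<open>m = m\<^sub>j\<close>.\<close>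

definition cyclic_succ :: "nat set \<Rightarrow> nat \<Rightarrow> nat" where
  "cyclic_succ M m = (if \<exists>x\<in>M. m < x then Min {x\<in>M. m < x} else Min M)"

lemma cyclic_succ_in:
  assumes "finite M" "m \<in> M"
  shows "cyclic_succ M m \<in> M"
proof (cases "\<exists>x\<in>M. m < x")
  case True
  then have "Min {x\<in>M. m < x} \<in> {x\<in>M. m < x}" using assms(1) by (intro Min_in) auto
  then show ?thesis using True by (simp add: cyclic_succ_def)
next
  case False
  then show ?thesis using assms by (auto simp: cyclic_succ_def intro: Min_in)
qed

lemma not_mem_cinto_cyclic_succ:
  assumes "finite M" "m \<in> M" "x \<in> M" "x \<noteq> m"
  shows "x \<notin> cinto N m (cyclic_succ M m)"
proof (cases "\<exists>y\<in>M. m < y")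
  case True
  define u where "u = Min {y\<in>M. m < y}"
  have "u \<in> {y\<in>M. m < y}" unfolding u_def using True assms(1) by (intro Min_in) auto
  then have "m < u" by simp
  moreover have "m < x \<Longrightarrow> u \<le> x" unfolding u_def using assms by (intro Min_le) auto
  moreover have "cyclic_succ M m = u" using True by (simp add: cyclic_succ_def u_def)
  ultimately show ?thesis using assms(4) by (cases "m < x") (auto simp: cinto_def cint_def)
next
  case False
  define u where "u = Min M"
  have "u \<le> x" "u \<le> m" unfolding u_def using assms by (intro Min_le; simp)+
  moreover have "x \<le> m" using False assms(3) by auto
  moreover have "cyclic_succ M m = u" using False by (simp add: cyclic_succ_def u_def)
  ultimately show ?thesis using assms(4) by (auto simp: cinto_def cint_def)
qed

lemma cinto_cyclic_succ_subset_cover: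
  assumes "M \<subseteq> {1..N}" "m \<in> M" "A \<subseteq> M"
    and "\<forall>a\<in>A. s a \<in> {1..N}" "{1..N} \<subseteq> (\<Union>a\<in>A. cint N a (s a))"
  shows "\<exists>a\<in>A. cinto N m (cyclic_succ M m) \<subseteq> cint N a (s a)"
proof -
  have "finite M" using assms(1) finite_subset by blast
  define m' where "m' = cyclic_succ M m"
  have mN: "m \<in> {1..N}" and m'N: "m' \<in> {1..N}"
    using assms(1,2) cyclic_succ_in[OF \<open>finite M\<close> assms(2)] unfolding m'_def by auto
  show ?thesis
  proof (cases "m' = m")
    case True
    then have "cinto N m m' = {}" by (simp add: cinto_def cint_def)
    moreover have "A \<noteq> {}" using assms(5) mN by auto
    ultimately show ?thesis unfolding m'_def by auto
  next
    case False
    define p where "p = (if m' = 1 then N else m' - 1)"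
    have pN: "p \<in> {1..N}" using m'N mN unfolding p_def by auto
    have gap: "cinto N m m' = cint N m p"
      unfolding p_def using mN m'N False by (intro cinto_eq_cint_pred) auto
    obtain a where a: "a \<in> A" "p \<in> cint N a (s a)" using assms(5) pN by blast
    have aN: "a \<in> {1..N}" using a(1) assms(1,3) by auto
    have "a \<notin> cint N m p - {m}"
      using not_mem_cinto_cyclic_succ[OF \<open>finite M\<close> assms(2), of a N] a(1) assms(3) gap
      unfolding m'_def by auto
    then have "cint N m p \<subseteq> cint N a p" by (rule cint_subset_cint_left[OF aN mN pN])
    also have "\<dots> \<subseteq> cint N a (s a)" using a(2) by (rule cint_subset_cint_right)
    finally show ?thesis using a(1) gap unfolding m'_def by auto
  qed
qed

lemma rstate_in_range:
  assumes "a \<in> {1..N}"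
  shows "rstate N e H a \<tau> \<in> {1..N}"
  using assms by (induction \<tau>) (auto simp: Suc_le_eq)

lemma cycle_dist_rstate_le:
  assumes "a \<in> {1..N}" "\<tau> < N"
  shows "cycle_dist N a (rstate N e H a \<tau>) \<le> \<tau>"
  using assms(2)
proof (induction \<tau>)
  case 0
  then show ?case by (simp add: cycle_dist_def)
next
  case (Suc \<tau>)
  then have "cycle_dist N a (rstate N e H a \<tau>) + 1 < N" by simp
  then show ?case
    using Suc cycle_dist_succ[OF assms(1) rstate_in_range[OF assms(1), of e H \<tau>]] by auto
qed

lemma visited_eq_cint: "visited N e H a \<tau> = cint N a (rstate N e H a \<tau>)"
  by (cases \<tau>) (auto simp: visited_def cint_def)

lemma visited_mono_Suc:
  assumes "a \<in> {1..N}" "Suc \<tau> < N"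
  shows "visited N e H a \<tau> \<subseteq> visited N e H a (Suc \<tau>)"
proof -
  let ?s = "rstate N e H a \<tau>" and ?s' = "rstate N e H a (Suc \<tau>)"
  have "cycle_dist N a ?s \<le> cycle_dist N a ?s'"
    using cycle_dist_succ[OF assms(1) rstate_in_range[OF assms(1), of e H \<tau>]]
      cycle_dist_rstate_le[OF assms(1), of \<tau> e H] assms(2)
    by auto
  then have "?s \<in> cint N a ?s'"
    using mem_cint_iff_cycle_dist[OF assms(1) rstate_in_range[OF assms(1)]] rstate_in_range[OF assms(1)] by blast
  then show ?thesis unfolding visited_eq_cint by (rule cint_subset_cint_right)
qed

lemma UN_Diff_removable:
  assumes "removable D A a"
  shows "\<Union> (D ` (A - {a})) = \<Union> (D ` A)"
  using assms by (auto simp: removable_def)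

lemma remove_steps_UN_eq:
  assumes "(remove_step D)\<^sup>*\<^sup>* A A'"
  shows "A' \<subseteq> A \<and> \<Union> (D ` A') = \<Union> (D ` A)"
  using assms
proof (induction rule: rtranclp_induct)
  case (step A' A'')
  then obtain a where "removable D A' a" "A'' = A' - {a}" by (auto simp: remove_step_def)
  with step.IH UN_Diff_removable show ?case by auto
qed simp

lemma active_seq_covers:
  assumes "active_seq N e H t A" "t < N" "\<tau> \<le> t"
  shows "A \<tau> \<subseteq> {1..N} \<and> {1..N} \<subseteq> (\<Union>a\<in>A \<tau>. visited N e H a \<tau>)"
  using assms(3)
proof (induction \<tau>)
  case 0
  then show ?case using assms(1) by (auto simp: active_seq_def visited_def)
next
  case (Suc \<tau>)
  then have IH: "A \<tau> \<subseteq> {1..N}" "{1..N} \<subseteq> (\<Union>a\<in>A \<tau>. visited N e H a \<tau>)" by auto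
  have "(remove_step (\<lambda>a. visited N e H a (Suc \<tau>)))\<^sup>*\<^sup>* (A \<tau>) (A (Suc \<tau>))"
    using assms(1) Suc.prems by (auto simp: active_seq_def)
  note removal = remove_steps_UN_eq[OF this]
  have "(\<Union>a\<in>A \<tau>. visited N e H a \<tau>) \<subseteq> (\<Union>a\<in>A \<tau>. visited N e H a (Suc \<tau>))"
    using IH(1) Suc.prems assms(2) by (intro UN_mono visited_mono_Suc) auto
  with IH removal show ?case by auto
qed

theorem lemma11:
  fixes V :: "'v set" and G :: "nat \<Rightarrow> 'v set set" and T :: "'v set set" and r :: 'v
    and v :: "nat \<Rightarrow> 'v" and n k \<Delta> L :: nat and b :: "nat \<Rightarrow> nat"
    and Aep :: "nat \<Rightarrow> nat \<Rightarrow> nat set"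
  assumes "finite V" and "card V = n" and "n \<ge> 2" and "k \<ge> 1"
    and "\<forall>j\<in>{1..L}. G j \<subseteq> edges_on V"
    and "spanning_tree V (\<Union>j\<in>{1..L}. G j) T"
    and "r \<in> V"
    and "dfs_tour T r (2 * (n - 1)) v"
  defines "N \<equiv> 2 * (n - 1)"
  defines "t \<equiv> N div (2 * k)"
  defines "\<rho> \<equiv> nat \<lceil>18 * real k * ln (6 * real k)\<rceil>"
  defines "e \<equiv> (\<lambda>q. {v q, v (Suc q)})"
  assumes "b 0 = 0" and "\<forall>j < \<rho>. b j \<le> b (Suc j)" and "b \<rho> \<le> L"
    and "\<forall>i\<in>{1..\<rho>}. card {j \<in> {b (i - 1) + 1 .. b i}. k_edge_deficient k T (G j)} \<ge> \<Delta> + t"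
    and "\<forall>i\<in>{1..\<rho>}. card {j \<in> {b (i - 1) + \<Delta> + 1 .. b i}. k_edge_deficient k T (G j)} \<ge> t"
  defines "H \<equiv> (\<lambda>i \<tau>. G (sorted_list_of_set
              {j \<in> {b (i - 1) + \<Delta> + 1 .. b i}. k_edge_deficient k T (G j)} ! (\<tau> - 1)))"
  assumes "\<forall>i\<in>{1..\<rho>}. active_seq N e (H i) t (Aep i)"
  defines "M \<equiv> (\<Union>i\<in>{1..\<rho>}. Aep i t)"
  defines "nxt \<equiv> (\<lambda>m. if \<exists>x\<in>M. m < x then Min {x\<in>M. m < x} else Min M)"
  shows "\<forall>i\<in>{1..\<rho>}. \<forall>I \<in> (\<lambda>m. cinto N m (nxt m)) ` M.
           \<exists>a\<in>Aep i t. I \<subseteq> visited N e (H i) a t"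
proof (intro ballI)
  fix i I assume i: "i \<in> {1..\<rho>}" and I: "I \<in> (\<lambda>m. cinto N m (nxt m)) ` M"
  have "t \<le> N div 2" unfolding t_def using assms(4) by (intro div_le_mono2) auto
  moreover have "N \<ge> 2" using assms(3) unfolding N_def by auto
  ultimately have "t < N" by linarith
  have cover: "Aep j t \<subseteq> {1..N} \<and> {1..N} \<subseteq> (\<Union>a\<in>Aep j t. visited N e (H j) a t)"
    if "j \<in> {1..\<rho>}" for j
    using active_seq_covers[of N e "H j" t "Aep j" t] that \<open>t < N\<close>
      \<open>\<forall>i\<in>{1..\<rho>}. active_seq N e (H i) t (Aep i)\<close>
    by blast
  have M_range: "M \<subseteq> {1..N}" unfolding M_def using cover by blast
  obtain m where m: "m \<in> M" "I = cinto N m (cyclic_succ M m)"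
    using I unfolding nxt_def cyclic_succ_def by auto
  have "Aep i t \<subseteq> M" unfolding M_def using i by blast
  then show "\<exists>a\<in>Aep i t. I \<subseteq> visited N e (H i) a t"
    using cinto_cyclic_succ_subset_cover[OF M_range m(1), of "Aep i t" "\<lambda>a. rstate N e (H i) a t"]
      cover[OF i] M_range rstate_in_range m(2)
    unfolding visited_eq_cint by blast
qed

end
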